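(* Assume $\rho>\rho_1$. Then there is a homeomorphism $h:\widetilde X\to[0,1]$ such that $h\circ\widetilde f\circ h^{-1}$ is an increasing homeomorphism of $[0,1]$ whose fixed points are $0$ and $1$ (corresponding to $(\omega_0,\omega_0,\dots)$ and $(1,1,\dots)$). In particular $\widetilde X_{T_\infty}=\{(\omega_0,\omega_0,\dots)\}$, where $T_\infty=(0,0,0,\dots)$.
   Context: Standing setup. Fix real numbers $\rho,\delta,\gamma,\alpha$ with $0<\rho<1$, $\delta>0$, $\gamma>-\delta/\rho$, $-\delta/\rho<\alpha<0$. Define $f:[0,1]\to[0,1]$ by $f(x)=f_0(x):=\frac{\alpha x-\alpha\rho}{\gamma x+\delta}$ for $x\in[0,\rho]$ and $f(x)=f_1(x):=\frac{x-\rho}{1-\rho}$ for $x\in(\rho,1]$. Put $\rho_1:=f_0(0)$; $\omega_0$ denotes the fixed point of $f$ in $[0,\rho)$. The inverse limit is $\widetilde X=\{(x_0,x_1,\dots)\in[0,1]^{\mathbb N}: f(x_{n+1})=x_n \ \forall n\}$ with the product topology; the shift is $\widetilde f(x_0,x_1,\dots)=(f(x_0),x_0,x_1,\dots)$. A point $\widetilde x=(x_0,x_1,\dots)$ is of type $T\in\{0,1\}^{\mathbb N}$ if $x_{n+1}\in[0,\rho]$ whenever $T(n)=0$ and $x_{n+1}\in(\rho,1]$ whenever $T(n)=1$; $\widetilde X_T$ is the set of points of type $T$. *)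

theory Defs
  imports "HOL-Analysis.Analysis"
begin

definition fmap :: "real \<Rightarrow> real \<Rightarrow> real \<Rightarrow> real \<Rightarrow> real \<Rightarrow> real" where
  "fmap \<rho> \<delta> \<gamma> \<alpha> x =
     (if x \<le> \<rho> then (\<alpha> * x - \<alpha> * \<rho>) / (\<gamma> * x + \<delta>) else (x - \<rho>) / (1 - \<rho>))"

definition rho1 :: "real \<Rightarrow> real \<Rightarrow> real \<Rightarrow> real \<Rightarrow> real" where
  "rho1 \<rho> \<delta> \<gamma> \<alpha> = (\<alpha> * 0 - \<alpha> * \<rho>) / (\<gamma> * 0 + \<delta>)"

definition omega0 :: "real \<Rightarrow> real \<Rightarrow> real \<Rightarrow> real \<Rightarrow> real" where
  "omega0 \<rho> \<delta> \<gamma> \<alpha> = (THE w. 0 \<le> w \<and> w < \<rho> \<and> fmap \<rho> \<delta> \<gamma> \<alpha> w = w)"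

definition invlim :: "real \<Rightarrow> real \<Rightarrow> real \<Rightarrow> real \<Rightarrow> (nat \<Rightarrow> real) set" where
  "invlim \<rho> \<delta> \<gamma> \<alpha> =
     {x. (\<forall>n. x n \<in> {0..1}) \<and> (\<forall>n. fmap \<rho> \<delta> \<gamma> \<alpha> (x (Suc n)) = x n)}"

definition shift :: "real \<Rightarrow> real \<Rightarrow> real \<Rightarrow> real \<Rightarrow> (nat \<Rightarrow> real) \<Rightarrow> (nat \<Rightarrow> real)" where
  "shift \<rho> \<delta> \<gamma> \<alpha> x = (\<lambda>n. if n = 0 then fmap \<rho> \<delta> \<gamma> \<alpha> (x 0) else x (n - 1))"

definition of_type :: "real \<Rightarrow> (nat \<Rightarrow> nat) \<Rightarrow> (nat \<Rightarrow> real) \<Rightarrow> bool" where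
  "of_type \<rho> T x = (\<forall>n. (T n = 0 \<longrightarrow> x (Suc n) \<in> {0..\<rho>}) \<and> (T n = 1 \<longrightarrow> x (Suc n) \<in> {\<rho><..1}))"

definition invlim_type :: "real \<Rightarrow> real \<Rightarrow> real \<Rightarrow> real \<Rightarrow> (nat \<Rightarrow> nat) \<Rightarrow> (nat \<Rightarrow> real) set" where
  "invlim_type \<rho> \<delta> \<gamma> \<alpha> T = {x \<in> invlim \<rho> \<delta> \<gamma> \<alpha>. of_type \<rho> T x}"

end

theory Submission
  imports Defs
begin

text \<open>Since \<open>\<rho>\<^sub>1 < \<rho>\<close>, the decreasing branch \<open>f\<^sub>0\<close> maps \<open>[0, \<rho>]\<close> into \<open>[0, \<rho>\<^sub>1]\<close>, and
  \<open>f\<^sub>0 \<circ> f\<^sub>0\<close> is an increasing self-map of \<open>[0, \<rho>]\<close> whose only fixed point is \<open>\<omega>\<^sub>0\<close>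
  (a 2-cycle would force \<open>\<alpha> + \<delta> = 0\<close>). Hence the iterates of \<open>f\<close> contract \<open>[0, \<rho>]\<close>
  uniformly to \<open>\<omega>\<^sub>0\<close>, and the only point of the inverse limit all of whose coordinates lie
  in \<open>[0, \<rho>]\<close> is the constant one. Any other point has a coordinate in \<open>(\<rho>, 1]\<close>, all
  later coordinates stay there, and on \<open>(\<rho>, 1]\<close> the map is affine with fixed point 1, so
  eventually \<open>x\<^sub>n = 1 - (1 - \<rho>)\<^sup>n s\<close> for a unique \<open>s \<ge> 0\<close>, which determines the point.
  Setting \<open>t = 1 / (1 + s)\<close> and sending \<open>t = 0\<close> to the constant point \<open>\<omega>\<^sub>0\<close> gives a
  continuous bijection from \<open>[0, 1]\<close> onto the inverse limit, hence a homeomorphism; it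
  conjugates the shift, which sends \<open>s\<close> to \<open>s / (1 - \<rho>)\<close>, to the increasing Moebius map
  \<open>t \<mapsto> (1 - \<rho>) t / (1 - \<rho> t)\<close> with fixed points 0 and 1.\<close>

section \<open>Iterates of monotone interval maps\<close>

lemma funpow_image_subset: "g ` S \<subseteq> S \<Longrightarrow> (g ^^ k) ` S \<subseteq> S"
  by (induction k) (auto simp del: funpow.simps simp: funpow_Suc_right)

lemma continuous_on_funpow:
  assumes "continuous_on S g" "g ` S \<subseteq> S"
  shows "continuous_on S (g ^^ k)"
proof (induction k)
  case (Suc k)
  have "(g ^^ k) ` S \<subseteq> S" using funpow_image_subset[OF assms(2)] .
  then show ?case using continuous_on_compose2[OF assms(1) Suc] by simp
qed (simp add: continuous_on_id)

lemma mono_on_funpow: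
  assumes "mono_on S g" "g ` S \<subseteq> S"
  shows "mono_on S (g ^^ k)"
proof (induction k)
  case (Suc k)
  have "(g ^^ k) x \<in> S" if "x \<in> S" for x using funpow_image_subset[OF assms(2)] that by blast
  with Suc show ?case using assms(1) by (auto simp: mono_on_def)
qed (simp add: mono_on_def)

lemma funpow_limit_fixpoint:
  fixes g :: "'a::t2_space \<Rightarrow> 'a"
  assumes S: "closed S" and cont: "continuous_on S g" and maps: "g ` S \<subseteq> S" and x: "x \<in> S"
    and lim: "(\<lambda>k. (g ^^ k) x) \<longlonglongrightarrow> L"
  shows "L \<in> S" "g L = L"
proof -
  have orbit: "(g ^^ k) x \<in> S" for k using funpow_image_subset[OF maps] x by blast
  show L: "L \<in> S" using Lim_in_closed_set[OF S _ _ lim] orbit by simp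
  have "(\<lambda>k. g ((g ^^ k) x)) \<longlonglongrightarrow> g L"
    using continuous_on_tendsto_compose[OF cont lim L] orbit by simp
  moreover have "(\<lambda>k. g ((g ^^ k) x)) \<longlonglongrightarrow> L"
    using LIMSEQ_Suc[OF lim] by simp
  ultimately show "g L = L" using LIMSEQ_unique by blast
qed

lemma monoseq_orbit_tendsto_unique_fixpoint:
  fixes g :: "real \<Rightarrow> real"
  assumes cont: "continuous_on {a..b} g" and maps: "g ` {a..b} \<subseteq> {a..b}" and x: "x \<in> {a..b}"
    and mono: "monoseq (\<lambda>k. (g ^^ k) x)" and unique: "\<And>y. y \<in> {a..b} \<Longrightarrow> g y = y \<Longrightarrow> y = w"
  shows "(\<lambda>k. (g ^^ k) x) \<longlonglongrightarrow> w"
proof -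
  have "Bseq (\<lambda>k. (g ^^ k) x)"
  proof (rule BseqI'[of _ "max \<bar>a\<bar> \<bar>b\<bar>"])
    fix k
    have "(g ^^ k) x \<in> {a..b}" using funpow_image_subset[OF maps, of k] x by blast
    then show "norm ((g ^^ k) x) \<le> max \<bar>a\<bar> \<bar>b\<bar>" by auto
  qed
  then have lim: "(\<lambda>k. (g ^^ k) x) \<longlonglongrightarrow> lim (\<lambda>k. (g ^^ k) x)"
    using Bseq_monoseq_convergent mono convergent_LIMSEQ_iff by blast
  then show ?thesis
    using funpow_limit_fixpoint[OF closed_atLeastAtMost cont maps x lim] unique by metis
qed

text \<open>The orbits of the endpoints are monotone and sandwich all other orbits.\<close>
lemma uniform_limit_funpow_unique_fixpoint:
  fixes g :: "real \<Rightarrow> real"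
  assumes cont: "continuous_on {a..b} g" and maps: "g ` {a..b} \<subseteq> {a..b}" and mono: "mono_on {a..b} g"
    and w: "w \<in> {a..b}" and unique: "\<And>x. x \<in> {a..b} \<Longrightarrow> g x = x \<Longrightarrow> x = w"
  shows "uniform_limit {a..b} (\<lambda>k. g ^^ k) (\<lambda>_. w) sequentially"
proof -
  have monok: "mono_on {a..b} (g ^^ k)" for k using mono_on_funpow[OF mono maps] .
  have to_w: "(\<lambda>k. (g ^^ k) x) \<longlonglongrightarrow> w" if "x \<in> {a..b}" "monoseq (\<lambda>k. (g ^^ k) x)" for x
    using monoseq_orbit_tendsto_unique_fixpoint[OF cont maps that unique] .
  have ab: "a \<in> {a..b}" "b \<in> {a..b}" using w by auto
  have gab: "g a \<in> {a..b}" "g b \<in> {a..b}" using maps ab by (meson image_subset_iff)+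
  have "incseq (\<lambda>k. (g ^^ k) a)"
  proof (rule incseq_SucI)
    fix k show "(g ^^ k) a \<le> (g ^^ Suc k) a"
      using mono_onD[OF monok[of k]] ab gab by (simp add: funpow_swap1)
  qed
  then have lo: "(\<lambda>k. (g ^^ k) a) \<longlonglongrightarrow> w" using to_w ab monoseq_iff by blast
  have "decseq (\<lambda>k. (g ^^ k) b)"
  proof (rule decseq_SucI)
    fix k show "(g ^^ Suc k) b \<le> (g ^^ k) b"
      using mono_onD[OF monok[of k]] ab gab by (simp add: funpow_swap1)
  qed
  then have hi: "(\<lambda>k. (g ^^ k) b) \<longlonglongrightarrow> w" using to_w ab monoseq_iff by blast
  show ?thesis
    unfolding uniform_limit_sequentially_iff
  proof (intro allI impI)
    fix e :: real assume "e > 0"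
    then have "\<forall>\<^sub>F k in sequentially. dist ((g ^^ k) a) w < e \<and> dist ((g ^^ k) b) w < e"
      using tendstoD[OF lo] tendstoD[OF hi] by (simp add: eventually_conj)
    then obtain N where N: "\<And>k. k \<ge> N \<Longrightarrow> dist ((g ^^ k) a) w < e \<and> dist ((g ^^ k) b) w < e"
      unfolding eventually_sequentially by blast
    have "dist ((g ^^ k) x) w < e" if "k \<ge> N" "x \<in> {a..b}" for k x
    proof -
      have "(g ^^ k) a \<le> (g ^^ k) x" "(g ^^ k) x \<le> (g ^^ k) b"
        using mono_onD[OF monok[of k]] that(2) ab by auto
      then show ?thesis using N[OF that(1)] by (auto simp: dist_real_def abs_less_iff)
    qed
    then show "\<exists>N. \<forall>k\<ge>N. \<forall>x\<in>{a..b}. dist ((g ^^ k) x) w < e" by blast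
  qed
qed

section \<open>The Moebius model of the shift\<close>

locale proper_fraction =
  fixes \<rho> :: real
  assumes rho_pos: "0 < \<rho>" and rho_less_1: "\<rho> < 1"
begin

lemma ex_pow_mult_le_1: "\<exists>m. (1 - \<rho>) ^ (n + m) * s \<le> 1"
proof -
  have "(\<lambda>k. (1 - \<rho>) ^ k * s) \<longlonglongrightarrow> 0"
    using rho_pos rho_less_1 by (intro tendsto_mult_left_zero LIMSEQ_power_zero) auto
  then obtain N where "\<And>k. k \<ge> N \<Longrightarrow> (1 - \<rho>) ^ k * s < 1"
    using order_tendstoD(2)[of _ 0 sequentially 1] unfolding eventually_sequentially by force
  then show ?thesis by (metis le_add2 less_le)
qed

lemma pow_mult_le_1_mono: "(1 - \<rho>) ^ k * s \<le> 1 \<Longrightarrow> k \<le> k' \<Longrightarrow> 0 \<le> s \<Longrightarrow> (1 - \<rho>) ^ k' * s \<le> 1"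
  using rho_pos rho_less_1 by (smt (verit) mult_right_mono power_decreasing)

definition shift_model :: "real \<Rightarrow> real" where
  "shift_model t = (1 - \<rho>) * t / (1 - \<rho> * t)"

definition shift_model_inv :: "real \<Rightarrow> real" where
  "shift_model_inv u = u / (1 - \<rho> + \<rho> * u)"

lemma one_minus_rho_mult_pos: "t \<le> 1 \<Longrightarrow> 0 < 1 - \<rho> * t"
  using rho_pos rho_less_1 mult_left_le[of t \<rho>] by (smt (verit) mult_le_cancel_left1)

lemma shift_model_inv_denom_pos: "0 \<le> u \<Longrightarrow> 0 < 1 - \<rho> + \<rho> * u"
  using rho_pos rho_less_1 by (smt (verit) mult_nonneg_nonneg)

lemma homeomorphism_shift_model: "homeomorphism {0..1} {0..1} shift_model shift_model_inv"
proof
  show "continuous_on {0..1} shift_model"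
    unfolding shift_model_def using one_minus_rho_mult_pos by (intro continuous_intros) force
  show "continuous_on {0..1} shift_model_inv"
    unfolding shift_model_inv_def using shift_model_inv_denom_pos by (intro continuous_intros) force
  show "shift_model ` {0..1} \<subseteq> {0..1}"
  proof
    fix y assume "y \<in> shift_model ` {0..1}"
    then obtain t where t: "t \<in> {0..1}" "y = shift_model t" by auto
    have "(1 - \<rho>) * t \<le> 1 - \<rho> * t" using t by (simp add: algebra_simps)
    then show "y \<in> {0..1}"
      using t one_minus_rho_mult_pos[of t] rho_less_1 by (simp add: shift_model_def divide_le_eq)
  qed
  show "shift_model_inv ` {0..1} \<subseteq> {0..1}"
  proof
    fix y assume "y \<in> shift_model_inv ` {0..1}"
    then obtain u where u: "u \<in> {0..1}" "y = shift_model_inv u" by auto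
    have "(1 - u) * \<rho> \<le> 1 - u" using u rho_pos rho_less_1 by (simp add: mult_right_le_one_le)
    then have "u \<le> 1 - \<rho> + \<rho> * u" by (simp add: algebra_simps)
    then show "y \<in> {0..1}"
      using u shift_model_inv_denom_pos[of u] by (simp add: shift_model_inv_def divide_le_eq)
  qed
  show "shift_model_inv (shift_model t) = t" if "t \<in> {0..1}" for t
  proof -
    have pos: "0 < 1 - \<rho> * t" using that one_minus_rho_mult_pos by simp
    then have "1 - \<rho> + \<rho> * shift_model t = (1 - \<rho>) / (1 - \<rho> * t)"
      by (simp add: shift_model_def field_simps)
    then show ?thesis using pos rho_less_1 by (simp add: shift_model_inv_def shift_model_def)
  qed
  show "shift_model (shift_model_inv u) = u" if "u \<in> {0..1}" for u
  proof -
    have pos: "0 < 1 - \<rho> + \<rho> * u" using that shift_model_inv_denom_pos by simp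
    then have "1 - \<rho> * shift_model_inv u = (1 - \<rho>) / (1 - \<rho> + \<rho> * u)"
      by (simp add: shift_model_inv_def field_simps)
    then show ?thesis using pos rho_less_1 by (simp add: shift_model_inv_def shift_model_def)
  qed
qed

lemma strict_mono_on_shift_model: "strict_mono_on {0..1} shift_model"
proof (rule strict_mono_onI)
  fix x y :: real assume "x \<in> {0..1}" "y \<in> {0..1}" "x < y"
  moreover have "shift_model y - shift_model x = (1 - \<rho>) * (y - x) / ((1 - \<rho> * x) * (1 - \<rho> * y))"
    using one_minus_rho_mult_pos[of x] one_minus_rho_mult_pos[of y] \<open>x \<in> _\<close> \<open>y \<in> _\<close>
    by (simp add: shift_model_def field_simps)
  ultimately show "shift_model x < shift_model y"
    using one_minus_rho_mult_pos[of x] one_minus_rho_mult_pos[of y] rho_less_1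
    by (smt (verit) atLeastAtMost_iff divide_pos_pos mult_pos_pos)
qed

lemma shift_model_fixpoints: "{t \<in> {0..1}. shift_model t = t} = {0, 1}"
proof -
  have "shift_model t = t \<longleftrightarrow> \<rho> * (t * (t - 1)) = 0" if "t \<le> 1" for t
    using one_minus_rho_mult_pos[OF that] by (auto simp: shift_model_def divide_eq_eq algebra_simps)
  then show ?thesis using rho_pos by auto
qed

end

section \<open>The interval map\<close>

locale piecewise_mobius_map = proper_fraction \<rho> for \<rho> :: real +
  fixes \<delta> \<gamma> \<alpha> :: real
  assumes delta_pos: "0 < \<delta>" and gamma_gt: "- \<delta> / \<rho> < \<gamma>" and alpha_neg: "\<alpha> < 0"
    and rho1_less_rho: "rho1 \<rho> \<delta> \<gamma> \<alpha> < \<rho>"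
begin

abbreviation "f \<equiv> fmap \<rho> \<delta> \<gamma> \<alpha>"
abbreviation "\<rho>\<^sub>1 \<equiv> rho1 \<rho> \<delta> \<gamma> \<alpha>"
abbreviation "\<omega>\<^sub>0 \<equiv> omega0 \<rho> \<delta> \<gamma> \<alpha>"

definition f0 :: "real \<Rightarrow> real" where
  "f0 x = (\<alpha> * x - \<alpha> * \<rho>) / (\<gamma> * x + \<delta>)"

lemma f_eq_f0: "x \<le> \<rho> \<Longrightarrow> f x = f0 x"
  by (simp add: fmap_def f0_def)

lemma f_eq_upper: "\<rho> < x \<Longrightarrow> f x = (x - \<rho>) / (1 - \<rho>)"
  by (simp add: fmap_def)

lemma f0_0: "f0 0 = \<rho>\<^sub>1" and f0_rho: "f0 \<rho> = 0"
  by (simp_all add: f0_def rho1_def)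

lemma f0_denom_pos: "0 \<le> x \<Longrightarrow> x \<le> \<rho> \<Longrightarrow> 0 < \<gamma> * x + \<delta>"
proof -
  assume x: "0 \<le> x" "x \<le> \<rho>"
  have "- \<delta> / \<rho> * \<rho> < \<gamma> * \<rho>" using gamma_gt rho_pos by (rule mult_strict_right_mono)
  then have "- \<delta> < \<gamma> * \<rho>" using rho_pos by simp
  moreover have "min 0 (\<gamma> * \<rho>) \<le> \<gamma> * x"
    using x by (cases "0 \<le> \<gamma>") (auto simp: mult_left_mono_neg min_le_iff_disj)
  ultimately show ?thesis using delta_pos by linarith
qed

lemma f0_strict_antimono: "0 \<le> x \<Longrightarrow> x < y \<Longrightarrow> y \<le> \<rho> \<Longrightarrow> f0 y < f0 x"
proof -
  assume xy: "0 \<le> x" "x < y" "y \<le> \<rho>"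
  have dx: "0 < \<gamma> * x + \<delta>" and dy: "0 < \<gamma> * y + \<delta>" and d\<rho>: "0 < \<gamma> * \<rho> + \<delta>"
    using f0_denom_pos xy by auto
  have "(\<alpha> * x - \<alpha> * \<rho>) * (\<gamma> * y + \<delta>) - (\<alpha> * y - \<alpha> * \<rho>) * (\<gamma> * x + \<delta>)
        = \<alpha> * (\<gamma> * \<rho> + \<delta>) * (x - y)" by (simp add: algebra_simps)
  also have "\<dots> > 0" using alpha_neg d\<rho> xy by (simp add: mult_neg_pos mult_neg_neg)
  finally show ?thesis using dx dy by (simp add: f0_def divide_less_eq less_divide_eq mult.commute)
qed

lemma f0_antimono: "0 \<le> x \<Longrightarrow> x \<le> y \<Longrightarrow> y \<le> \<rho> \<Longrightarrow> f0 y \<le> f0 x"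
  using f0_strict_antimono by (cases "x = y") (auto intro: less_imp_le)

lemma f_lower_range: "0 \<le> x \<Longrightarrow> x \<le> \<rho> \<Longrightarrow> 0 \<le> f x \<and> f x \<le> \<rho>\<^sub>1"
  using f0_antimono[of x \<rho>] f0_antimono[of 0 x] f0_0 f0_rho f_eq_f0 by auto

lemma f_maps_lower: "x \<in> {0..\<rho>} \<Longrightarrow> f x \<in> {0..\<rho>}"
  using f_lower_range rho1_less_rho by fastforce

lemma f_image_unit: "f ` {0..1} \<subseteq> {0..1}"
proof
  fix y assume "y \<in> f ` {0..1}"
  then obtain x where x: "x \<in> {0..1}" "y = f x" by blast
  show "y \<in> {0..1}"
  proof (cases "x \<le> \<rho>")
    case True
    then show ?thesis using x f_maps_lower[of x] rho_less_1 by simp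
  next
    case False
    then show ?thesis using x rho_less_1 by (simp add: f_eq_upper divide_le_eq)
  qed
qed

lemma continuous_on_f0: "continuous_on {0..\<rho>} f0"
  unfolding f0_def using f0_denom_pos by (intro continuous_intros) force

lemma continuous_on_f: "continuous_on {0..1} f"
proof -
  have "continuous_on {0..\<rho>} f"
    using continuous_on_f0 by (rule continuous_on_cong[THEN iffD1, rotated 2]) (auto simp: f_eq_f0)
  moreover have "continuous_on {\<rho>..1} f"
  proof (rule continuous_on_cong[THEN iffD1, rotated 2])
    show "continuous_on {\<rho>..1} (\<lambda>x. (x - \<rho>) / (1 - \<rho>))"
      using rho_less_1 by (intro continuous_intros) auto
  qed (auto simp: fmap_def)
  moreover have "{0..1} = {0..\<rho>} \<union> {\<rho>..1}" using rho_pos rho_less_1 by auto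
  ultimately show ?thesis using continuous_on_closed_Un[of "{0..\<rho>}" "{\<rho>..1}"] by simp
qed

lemma f_fixpoint_unique: "x \<in> {0..\<rho>} \<Longrightarrow> y \<in> {0..\<rho>} \<Longrightarrow> f x = x \<Longrightarrow> f y = y \<Longrightarrow> x = y"
  using f0_strict_antimono[of x y] f0_strict_antimono[of y x] f_eq_f0
  by (cases x y rule: linorder_cases) auto

lemma alpha_plus_delta_pos: "0 < \<alpha> + \<delta>"
proof -
  have "- \<alpha> * \<rho> / \<delta> < \<rho>" using rho1_less_rho by (simp add: rho1_def)
  then have "- \<alpha> * \<rho> < \<delta> * \<rho>" using delta_pos by (metis divide_less_eq mult.commute)
  then have "- \<alpha> < \<delta>" using rho_pos mult_less_cancel_right_pos by fastforce
  then show ?thesis by simp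
qed

lemma f_period2_imp_fixpoint:
  assumes x: "x \<in> {0..\<rho>}" and period2: "f (f x) = x"
  shows "f x = x"
proof -
  define y where "y = f x"
  have y: "y \<in> {0..\<rho>}" using f_maps_lower x y_def by blast
  have dx: "0 < \<gamma> * x + \<delta>" and dy: "0 < \<gamma> * y + \<delta>" using f0_denom_pos x y by auto
  have "f0 x = y" "f0 y = x" using x y period2 f_eq_f0 unfolding y_def by auto
  then have "\<alpha> * x - \<alpha> * \<rho> = y * (\<gamma> * x + \<delta>)" "\<alpha> * y - \<alpha> * \<rho> = x * (\<gamma> * y + \<delta>)"
    using dx dy unfolding f0_def by (simp_all add: divide_eq_eq)
  then have "(\<alpha> + \<delta>) * (x - y) = 0" by (simp add: algebra_simps)
  then show ?thesis unfolding y_def using alpha_plus_delta_pos by simp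
qed

lemma omega0_in_lower: "\<omega>\<^sub>0 \<in> {0..<\<rho>}" and f_omega0: "f \<omega>\<^sub>0 = \<omega>\<^sub>0"
proof -
  have "continuous_on {0..\<rho>} (\<lambda>x. f0 x - x)" using continuous_on_f0 by (intro continuous_intros)
  moreover have "f0 \<rho> - \<rho> \<le> 0" "0 \<le> f0 0 - 0" using f0_rho f_lower_range[of 0] f0_0 rho_pos by auto
  ultimately obtain w where w: "w \<in> {0..\<rho>}" "f0 w = w"
    using IVT2'[of "\<lambda>x. f0 x - x" \<rho> 0 0] rho_pos by auto
  then have "w \<noteq> \<rho>" using f0_rho rho_pos by auto
  with w have fixed: "w \<in> {0..<\<rho>} \<and> f w = w" using f_eq_f0 by auto
  have "\<omega>\<^sub>0 = w" unfolding omega0_def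
  proof (rule the_equality)
    show "0 \<le> w \<and> w < \<rho> \<and> f w = w" using fixed by simp
    show "x = w" if "0 \<le> x \<and> x < \<rho> \<and> f x = x" for x
      using that fixed f_fixpoint_unique[of x w] by simp
  qed
  then show "\<omega>\<^sub>0 \<in> {0..<\<rho>}" "f \<omega>\<^sub>0 = \<omega>\<^sub>0" using fixed by simp_all
qed

lemma eq_omega0_if_period2: "x \<in> {0..\<rho>} \<Longrightarrow> f (f x) = x \<Longrightarrow> x = \<omega>\<^sub>0"
  using f_period2_imp_fixpoint f_fixpoint_unique omega0_in_lower f_omega0
  by (meson atLeastLessThan_iff atLeastAtMost_iff less_imp_le)

lemma uniform_attraction_omega0:
  assumes "0 < e"
  obtains J where "\<And>y. y \<in> {0..\<rho>} \<Longrightarrow> \<bar>(f ^^ J) y - \<omega>\<^sub>0\<bar> < e"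
proof -
  have "{0..\<rho>} \<subseteq> {0..1}" using rho_less_1 by auto
  then have cont: "continuous_on {0..\<rho>} f" using continuous_on_f continuous_on_subset by blast
  have maps: "f ` {0..\<rho>} \<subseteq> {0..\<rho>}" using f_maps_lower by blast
  have "mono_on {0..\<rho>} (f ^^ 2)"
  proof (rule mono_onI)
    fix x y assume "x \<in> {0..\<rho>}" "y \<in> {0..\<rho>}" "x \<le> y"
    then show "(f ^^ 2) x \<le> (f ^^ 2) y"
      using f0_antimono[of x y] f0_antimono[of "f y" "f x"] f_maps_lower f_eq_f0
      by (simp add: numeral_2_eq_2)
  qed
  moreover have "continuous_on {0..\<rho>} (f ^^ 2)" by (rule continuous_on_funpow[OF cont maps])
  moreover have "(f ^^ 2) ` {0..\<rho>} \<subseteq> {0..\<rho>}" using funpow_image_subset[OF maps] .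
  moreover have "\<omega>\<^sub>0 \<in> {0..\<rho>}" using omega0_in_lower by auto
  moreover have "x = \<omega>\<^sub>0" if "x \<in> {0..\<rho>}" "(f ^^ 2) x = x" for x
    using eq_omega0_if_period2 that by (simp add: numeral_2_eq_2)
  ultimately have "uniform_limit {0..\<rho>} (\<lambda>k. (f ^^ 2) ^^ k) (\<lambda>_. \<omega>\<^sub>0) sequentially"
    by (intro uniform_limit_funpow_unique_fixpoint)
  then obtain N where "\<And>y. y \<in> {0..\<rho>} \<Longrightarrow> dist (((f ^^ 2) ^^ N) y) \<omega>\<^sub>0 < e"
    using assms unfolding uniform_limit_sequentially_iff by blast
  then show ?thesis using that[of "2 * N"] by (simp add: funpow_mult dist_real_def)
qed

section \<open>Points of the inverse limit\<close>

abbreviation "X \<equiv> invlim \<rho> \<delta> \<gamma> \<alpha>"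

lemma invlim_coord: "x \<in> X \<Longrightarrow> x n \<in> {0..1}"
  and invlim_f: "x \<in> X \<Longrightarrow> f (x (Suc n)) = x n"
  unfolding invlim_def by auto

lemma invlim_funpow: "x \<in> X \<Longrightarrow> (f ^^ k) (x (n + k)) = x n"
  by (induction k) (simp_all add: funpow_swap1 invlim_f)

lemma const_omega0_in_invlim: "(\<lambda>_. \<omega>\<^sub>0) \<in> X"
  unfolding invlim_def using omega0_in_lower f_omega0 rho_less_1 by auto

lemma invlim_le_rho_downward: "x \<in> X \<Longrightarrow> x (n + j) \<le> \<rho> \<Longrightarrow> x n \<le> \<rho>"
proof (induction j)
  case (Suc j)
  then have "x (n + j) \<le> \<rho>\<^sub>1"
    using f_lower_range[of "x (Suc (n + j))"] invlim_f[of x "n + j"] invlim_coord[of x] by auto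
  then show ?case using Suc rho1_less_rho by simp
qed simp

lemma invlim_lower_eq_const:
  assumes x: "x \<in> X" and lower: "\<And>n. x (Suc n) \<le> \<rho>"
  shows "x = (\<lambda>_. \<omega>\<^sub>0)"
proof
  fix n
  have coord: "x k \<in> {0..\<rho>}" for k
    using invlim_coord[OF x, of k] lower[of k] invlim_le_rho_downward[OF x, of k 1] by auto
  have "\<bar>x n - \<omega>\<^sub>0\<bar> < e" if e: "0 < e" for e
  proof -
    obtain J where J: "\<And>y. y \<in> {0..\<rho>} \<Longrightarrow> \<bar>(f ^^ J) y - \<omega>\<^sub>0\<bar> < e"
      using uniform_attraction_omega0[OF e] by blast
    show ?thesis using J[OF coord[of "n + J"]] invlim_funpow[OF x, of J n] by simp
  qed
  then have "\<bar>x n - \<omega>\<^sub>0\<bar> \<le> 0" using dense_ge less_imp_le by blast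
  then show "x n = \<omega>\<^sub>0" by simp
qed

lemma invlim_geometric_tail:
  assumes x: "x \<in> X" and upper: "\<rho> < x M"
  shows "1 - x (M + k) = (1 - \<rho>) ^ k * (1 - x M)"
proof (induction k)
  case (Suc k)
  have "\<rho> < x (M + Suc k)" using invlim_le_rho_downward[OF x, of M "Suc k"] upper by (meson not_le)
  then have "x (M + k) = (x (M + Suc k) - \<rho>) / (1 - \<rho>)"
    using invlim_f[OF x, of "M + k"] f_eq_upper by simp
  then have "1 - x (M + Suc k) = (1 - \<rho>) * (1 - x (M + k))"
    using rho_less_1 by (simp add: field_simps)
  then show ?case using Suc by simp
qed simp

lemma f_one_minus: "c \<in> {0..1} \<Longrightarrow> f (1 - (1 - \<rho>) * c) = 1 - c"
proof (cases "c = 1")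
  case True
  then show ?thesis using f_eq_f0[of \<rho>] f0_rho by simp
next
  case False
  assume "c \<in> {0..1}"
  with False have "(1 - \<rho>) * c < 1 - \<rho>" using rho_less_1 by simp
  then have "f (1 - (1 - \<rho>) * c) = (1 - (1 - \<rho>) * c - \<rho>) / (1 - \<rho>)" by (intro f_eq_upper) simp
  also have "\<dots> = 1 - c" using rho_less_1 by (simp add: field_simps)
  finally show ?thesis .
qed

text \<open>For \<open>s \<ge> 0\<close>, \<open>tail_point s\<close> is the point of the inverse limit with coordinates
  eventually \<open>1 - (1 - \<rho>)\<^sup>n s\<close>; its \<open>n\<close>-th coordinate is pulled back by \<open>f\<^sup>m\<close> from index
  \<open>n + m\<close>, for any \<open>m\<close> that puts the value there into \<open>[0, 1]\<close>.\<close>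
definition tail_coord :: "real \<Rightarrow> nat \<Rightarrow> nat \<Rightarrow> real" where
  "tail_coord s n m = (f ^^ m) (1 - (1 - \<rho>) ^ (n + m) * s)"

definition tail_point :: "real \<Rightarrow> nat \<Rightarrow> real" where
  "tail_point s n = tail_coord s n (LEAST m. (1 - \<rho>) ^ (n + m) * s \<le> 1)"

lemma tail_coord_Suc:
  assumes "0 \<le> s" "(1 - \<rho>) ^ (n + m) * s \<le> 1"
  shows "tail_coord s n (Suc m) = tail_coord s n m"
proof -
  have "(1 - \<rho>) ^ (n + m) * s \<in> {0..1}" using assms rho_less_1 by simp
  then show ?thesis
    unfolding tail_coord_def using f_one_minus
    by (simp add: funpow_Suc_right mult.assoc del: funpow.simps)
qed

lemma tail_coord_stable:
  assumes s: "0 \<le> s" and m: "(1 - \<rho>) ^ (n + m) * s \<le> 1" and "m \<le> m'"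
  shows "tail_coord s n m' = tail_coord s n m"
  using \<open>m \<le> m'\<close>
proof (induction m' rule: dec_induct)
  case (step k)
  then show ?case using tail_coord_Suc[OF s] pow_mult_le_1_mono[OF m _ s, of "n + k"] by simp
qed simp

lemma tail_point_eq_tail_coord:
  assumes s: "0 \<le> s" and m: "(1 - \<rho>) ^ (n + m) * s \<le> 1"
  shows "tail_point s n = tail_coord s n m"
proof -
  let ?m0 = "LEAST m. (1 - \<rho>) ^ (n + m) * s \<le> 1"
  have "(1 - \<rho>) ^ (n + ?m0) * s \<le> 1" by (rule LeastI) (rule m)
  moreover have "?m0 \<le> m" by (rule Least_le) (rule m)
  ultimately show ?thesis unfolding tail_point_def using tail_coord_stable[OF s] by metis
qed

lemma tail_point_eq_geometric:
  "0 \<le> s \<Longrightarrow> (1 - \<rho>) ^ n * s \<le> 1 \<Longrightarrow> tail_point s n = 1 - (1 - \<rho>) ^ n * s"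
  using tail_point_eq_tail_coord[of s n 0] by (simp add: tail_coord_def)

lemma tail_point_eventually_geometric:
  assumes s: "0 \<le> s"
  obtains N where "\<And>n. N \<le> n \<Longrightarrow> tail_point s n = 1 - (1 - \<rho>) ^ n * s"
proof -
  obtain N where N: "(1 - \<rho>) ^ (0 + N) * s \<le> 1" using ex_pow_mult_le_1 by blast
  show ?thesis
  proof (rule that)
    fix n assume "N \<le> n"
    then show "tail_point s n = 1 - (1 - \<rho>) ^ n * s"
      using pow_mult_le_1_mono[OF _ _ s] N tail_point_eq_geometric[OF s] by simp
  qed
qed

lemma tail_coord_in_unit:
  assumes "0 \<le> s" "(1 - \<rho>) ^ (n + m) * s \<le> 1"
  shows "tail_coord s n m \<in> {0..1}"
proof -
  have "1 - (1 - \<rho>) ^ (n + m) * s \<in> {0..1}" using assms rho_less_1 by simp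
  then show ?thesis unfolding tail_coord_def using funpow_image_subset[OF f_image_unit, of m] by blast
qed

lemma tail_point_in_invlim:
  assumes s: "0 \<le> s"
  shows "tail_point s \<in> X"
proof -
  have "tail_point s n \<in> {0..1} \<and> f (tail_point s (Suc n)) = tail_point s n" for n
  proof -
    obtain m where m: "(1 - \<rho>) ^ (Suc n + m) * s \<le> 1" using ex_pow_mult_le_1 by blast
    have "tail_point s n = tail_coord s n (Suc m)"
      using tail_point_eq_tail_coord[OF s, of n "Suc m"] m by simp
    moreover have "tail_coord s n (Suc m) = f (tail_coord s (Suc n) m)" by (simp add: tail_coord_def)
    ultimately show ?thesis
      using tail_point_eq_tail_coord[OF s m] tail_coord_in_unit[OF s, of n "Suc m"] m by simp
  qed
  then show ?thesis unfolding invlim_def by auto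
qed

lemma tail_point_0: "tail_point 0 = (\<lambda>_. 1)"
  using tail_point_eq_geometric[of 0] by auto

lemma inj_on_tail_point: "inj_on tail_point {0..}"
proof
  fix s s' :: real assume s: "s \<in> {0..}" and s': "s' \<in> {0..}" and eq: "tail_point s = tail_point s'"
  obtain N where N: "\<And>n. N \<le> n \<Longrightarrow> tail_point s n = 1 - (1 - \<rho>) ^ n * s"
    using tail_point_eventually_geometric s by auto
  obtain N' where N': "\<And>n. N' \<le> n \<Longrightarrow> tail_point s' n = 1 - (1 - \<rho>) ^ n * s'"
    using tail_point_eventually_geometric s' by auto
  have "1 - (1 - \<rho>) ^ (N + N') * s = 1 - (1 - \<rho>) ^ (N + N') * s'"
    using N[of "N + N'"] N'[of "N + N'"] eq by (metis le_add1 le_add2)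
  then show "s = s'" using rho_less_1 by auto
qed

lemma tail_point_ne_const_omega0:
  assumes s: "0 \<le> s"
  shows "tail_point s \<noteq> (\<lambda>_. \<omega>\<^sub>0)"
proof
  assume eq: "tail_point s = (\<lambda>_. \<omega>\<^sub>0)"
  obtain N where N: "\<And>n. N \<le> n \<Longrightarrow> tail_point s n = 1 - (1 - \<rho>) ^ n * s"
    using tail_point_eventually_geometric s by auto
  have "(1 - \<rho>) ^ N * s = (1 - \<rho>) ^ Suc N * s" using N[of N] N[of "Suc N"] eq by simp
  then have "\<rho> * ((1 - \<rho>) ^ N * s) = 0" by (simp add: algebra_simps)
  then have "s = 0" using rho_pos rho_less_1 by simp
  then have "\<omega>\<^sub>0 = 1" using N[of N] eq by (metis diff_zero mult_zero_right order_refl)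
  then show False using omega0_in_lower rho_less_1 by simp
qed

lemma shift_tail_point:
  assumes s: "0 \<le> s"
  shows "shift \<rho> \<delta> \<gamma> \<alpha> (tail_point s) = tail_point (s / (1 - \<rho>))"
proof
  fix n
  have s': "0 \<le> s / (1 - \<rho>)" using s rho_less_1 by simp
  have scale: "(1 - \<rho>) ^ Suc k * (s / (1 - \<rho>)) = (1 - \<rho>) ^ k * s" for k
    using rho_less_1 by simp
  show "shift \<rho> \<delta> \<gamma> \<alpha> (tail_point s) n = tail_point (s / (1 - \<rho>)) n"
  proof (cases n)
    case 0
    obtain m where m: "(1 - \<rho>) ^ (0 + m) * s \<le> 1" using ex_pow_mult_le_1 by blast
    have "tail_point (s / (1 - \<rho>)) 0 = tail_coord (s / (1 - \<rho>)) 0 (Suc m)"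
      using tail_point_eq_tail_coord[OF s', of 0 "Suc m"] m scale by simp
    also have "\<dots> = f (tail_coord s 0 m)" unfolding tail_coord_def using scale by simp
    also have "\<dots> = f (tail_point s 0)" using tail_point_eq_tail_coord[OF s m] by simp
    finally show ?thesis using 0 by (simp add: shift_def)
  next
    case (Suc k)
    obtain m where m: "(1 - \<rho>) ^ (k + m) * s \<le> 1" using ex_pow_mult_le_1 by blast
    have "tail_point (s / (1 - \<rho>)) (Suc k) = tail_coord (s / (1 - \<rho>)) (Suc k) m"
      using tail_point_eq_tail_coord[OF s', of "Suc k" m] m scale[of "k + m"] by simp
    also have "\<dots> = tail_coord s k m" unfolding tail_coord_def using scale by simp
    also have "\<dots> = tail_point s k" using tail_point_eq_tail_coord[OF s m] by simp
    finally show ?thesis using Suc by (simp add: shift_def)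
  qed
qed

lemma invlim_eq_tail_point:
  assumes x: "x \<in> X" and ne: "x \<noteq> (\<lambda>_. \<omega>\<^sub>0)"
  obtains s where "0 \<le> s" "x = tail_point s"
proof -
  obtain M where M: "\<rho> < x M" using invlim_lower_eq_const[OF x] ne by (meson not_le)
  define s where "s = (1 - x M) / (1 - \<rho>) ^ M"
  have s: "0 \<le> s" unfolding s_def using invlim_coord[OF x, of M] rho_less_1 by simp
  have "x n = tail_point s n" for n
  proof -
    have tail: "x (n + M) = 1 - (1 - \<rho>) ^ (n + M) * s"
      using invlim_geometric_tail[OF x M, of n] rho_less_1
      by (simp add: s_def power_add add.commute)
    then have "(1 - \<rho>) ^ (n + M) * s \<le> 1" using invlim_coord[OF x, of "n + M"] by simp
    then show ?thesis
      using invlim_funpow[OF x, of M n] tail tail_point_eq_tail_coord[OF s] by (simp add: tail_coord_def)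
  qed
  then show ?thesis using that s by blast
qed

lemma tail_point_le_rho:
  assumes s: "0 \<le> s" and large: "1 - \<rho> \<le> (1 - \<rho>) ^ k * s"
  shows "tail_point s k \<le> \<rho>"
proof -
  obtain j where j: "(1 - \<rho>) ^ (k + j) * s \<le> 1" and least: "\<And>i. i < j \<Longrightarrow> 1 < (1 - \<rho>) ^ (k + i) * s"
    using ex_pow_mult_le_1[of k s] exists_least_iff[of "\<lambda>j. (1 - \<rho>) ^ (k + j) * s \<le> 1"]
    by (auto simp: not_le)
  have "1 - \<rho> \<le> (1 - \<rho>) ^ (k + j) * s"
  proof (cases j)
    case (Suc i)
    then have "(1 - \<rho>) * 1 \<le> (1 - \<rho>) * ((1 - \<rho>) ^ (k + i) * s)"
      using least[of i] rho_less_1 by (intro mult_left_mono) auto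
    then show ?thesis using Suc by simp
  qed (simp add: large)
  then have "tail_point s (k + j) \<le> \<rho>" using tail_point_eq_geometric[OF s j] by simp
  then show ?thesis using invlim_le_rho_downward[OF tail_point_in_invlim[OF s]] by blast
qed

section \<open>Parametrization by the unit interval\<close>

text \<open>The parameter \<open>t = 1 / (1 + s)\<close> compactifies \<open>s \<in> [0, \<infinity>)\<close>; the constant point
  \<open>\<omega>\<^sub>0\<close> is attached at \<open>t = 0\<close>.\<close>
definition param :: "real \<Rightarrow> nat \<Rightarrow> real" where
  "param t = (if t = 0 then (\<lambda>_. \<omega>\<^sub>0) else tail_point ((1 - t) / t))"

lemma param_image: "param ` {0..1} = X"
proof
  show "param ` {0..1} \<subseteq> X"
    using const_omega0_in_invlim tail_point_in_invlim by (auto simp: param_def)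
  show "X \<subseteq> param ` {0..1}"
  proof
    fix x assume x: "x \<in> X"
    show "x \<in> param ` {0..1}"
    proof (cases "x = (\<lambda>_. \<omega>\<^sub>0)")
      case True
      then show ?thesis by (force simp: param_def)
    next
      case False
      then obtain s where s: "0 \<le> s" "x = tail_point s" using invlim_eq_tail_point[OF x] by blast
      have "(1 - 1 / (1 + s)) / (1 / (1 + s)) = s" using s by (simp add: field_simps)
      then have "param (1 / (1 + s)) = x" using s by (simp add: param_def)
      moreover have "1 / (1 + s) \<in> {0..1}" using s by simp
      ultimately show ?thesis by blast
    qed
  qed
qed

lemma inj_on_param: "inj_on param {0..1}"
proof
  fix t u assume t: "t \<in> {0..1}" and u: "u \<in> {0..1}" and eq: "param t = param u"
  have nonneg: "0 \<le> (1 - v) / v" if "v \<in> {0..1}" for v :: real using that by simp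
  show "t = u"
  proof (cases "t = 0 \<or> u = 0")
    case True
    have "param v \<noteq> (\<lambda>_. \<omega>\<^sub>0)" if "v \<in> {0..1}" "v \<noteq> 0" for v
      using tail_point_ne_const_omega0 nonneg that by (simp add: param_def)
    then show ?thesis using True eq t u by (metis param_def)
  next
    case False
    then have "(1 - t) / t = (1 - u) / u"
      using eq inj_on_tail_point nonneg[OF t] nonneg[OF u] by (auto simp: param_def inj_on_def)
    then have "1 / t = 1 / u" using False by (simp add: diff_divide_distrib)
    then show ?thesis by simp
  qed
qed

lemma shift_param:
  assumes t: "t \<in> {0..1}"
  shows "shift \<rho> \<delta> \<gamma> \<alpha> (param t) = param (shift_model t)"
proof (cases "t = 0")
  case True
  then show ?thesis using f_omega0 by (auto simp: param_def shift_model_def shift_def)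
next
  case False
  have pos: "0 < 1 - \<rho> * t" using t one_minus_rho_mult_pos by simp
  have "shift_model t \<noteq> 0" using False pos rho_less_1 by (simp add: shift_model_def)
  moreover have "(1 - shift_model t) / shift_model t = ((1 - t) / t) / (1 - \<rho>)"
  proof -
    have "1 - shift_model t = (1 - t) / (1 - \<rho> * t)" using pos by (simp add: shift_model_def field_simps)
    then have "(1 - shift_model t) / shift_model t = ((1 - t) / (1 - \<rho> * t)) / ((1 - \<rho>) * t / (1 - \<rho> * t))"
      by (simp add: shift_model_def)
    also have "\<dots> = ((1 - t) / t) / (1 - \<rho>)" using pos by (simp add: divide_divide_times_eq)
    finally show ?thesis .
  qed
  moreover have "0 \<le> (1 - t) / t" using t by simp
  ultimately show ?thesis using False shift_tail_point by (simp add: param_def)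
qed

lemma invlim_type_0: "invlim_type \<rho> \<delta> \<gamma> \<alpha> (\<lambda>_. 0) = {\<lambda>_. \<omega>\<^sub>0}"
proof
  show "invlim_type \<rho> \<delta> \<gamma> \<alpha> (\<lambda>_. 0) \<subseteq> {\<lambda>_. \<omega>\<^sub>0}"
  proof
    fix x assume "x \<in> invlim_type \<rho> \<delta> \<gamma> \<alpha> (\<lambda>_. 0)"
    then have "x \<in> X" "\<And>n. x (Suc n) \<le> \<rho>" unfolding invlim_type_def of_type_def by auto
    then show "x \<in> {\<lambda>_. \<omega>\<^sub>0}" using invlim_lower_eq_const by blast
  qed
  show "{\<lambda>_. \<omega>\<^sub>0} \<subseteq> invlim_type \<rho> \<delta> \<gamma> \<alpha> (\<lambda>_. 0)"
    using const_omega0_in_invlim omega0_in_lower unfolding invlim_type_def of_type_def by auto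
qed

lemma continuous_on_param_coord_away_from_0:
  assumes a: "0 < a"
  shows "continuous_on {a..1} (\<lambda>t. param t n)"
proof -
  obtain m where m: "(1 - \<rho>) ^ (n + m) * ((1 - a) / a) \<le> 1" using ex_pow_mult_le_1 by blast
  let ?y = "\<lambda>t. 1 - (1 - \<rho>) ^ (n + m) * ((1 - t) / t)"
  have bound: "0 \<le> (1 - t) / t \<and> (1 - \<rho>) ^ (n + m) * ((1 - t) / t) \<le> 1" if t: "t \<in> {a..1}" for t
  proof -
    have "(1 - t) / t \<le> (1 - a) / a"
      using t a by (simp add: diff_divide_distrib frac_le)
    then have "(1 - \<rho>) ^ (n + m) * ((1 - t) / t) \<le> (1 - \<rho>) ^ (n + m) * ((1 - a) / a)"
      using rho_less_1 by (intro mult_left_mono) auto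
    moreover have "0 \<le> (1 - t) / t" using t a by simp
    ultimately show ?thesis using m by linarith
  qed
  have "continuous_on {a..1} ?y" using a by (intro continuous_intros) auto
  moreover have "?y ` {a..1} \<subseteq> {0..1}"
  proof
    fix y assume "y \<in> ?y ` {a..1}"
    then obtain t where t: "t \<in> {a..1}" "y = ?y t" by blast
    have "0 \<le> (1 - \<rho>) ^ (n + m) * ((1 - t) / t)"
      using bound[OF t(1)] rho_less_1 by (intro mult_nonneg_nonneg) auto
    then show "y \<in> {0..1}" unfolding t(2) atLeastAtMost_iff using bound[OF t(1)] by linarith
  qed
  ultimately have "continuous_on {a..1} (\<lambda>t. (f ^^ m) (?y t))"
    using continuous_on_compose2[OF continuous_on_funpow[OF continuous_on_f f_image_unit]] by blast
  moreover have "param t n = (f ^^ m) (?y t)" if "t \<in> {a..1}" for t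
    using that a bound[OF that] tail_point_eq_tail_coord by (simp add: param_def tail_coord_def)
  ultimately show ?thesis by (metis (no_types, lifting) continuous_on_cong)
qed

text \<open>Near \<open>t = 0\<close> the coordinate \<open>n + J\<close> of \<open>param t\<close> is in \<open>[0, \<rho>]\<close>, and \<open>J\<close> iterations
  of \<open>f\<close> bring it uniformly close to \<open>\<omega>\<^sub>0\<close>.\<close>
lemma continuous_param_coord_at_0: "continuous (at 0 within {0..1}) (\<lambda>t. param t n)"
  unfolding continuous_within tendsto_iff eventually_at
proof (intro allI impI)
  fix e :: real assume "0 < e"
  then obtain J where J: "\<And>y. y \<in> {0..\<rho>} \<Longrightarrow> \<bar>(f ^^ J) y - \<omega>\<^sub>0\<bar> < e"
    using uniform_attraction_omega0 by blast
  define B where "B = (1 - \<rho>) / (1 - \<rho>) ^ (n + J)"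
  have B: "0 < B" "(1 - \<rho>) ^ (n + J) * B = 1 - \<rho>" using rho_less_1 by (simp_all add: B_def)
  have "dist (param t n) (param 0 n) < e" if t: "t \<in> {0..1}" "t \<noteq> 0" "dist t 0 < 1 / (1 + B)" for t
  proof -
    define s where "s = (1 - t) / t"
    have s: "0 \<le> s" using t by (simp add: s_def)
    have "B * t < 1 - t" using t B by (simp add: field_simps)
    then have "B \<le> s" using t by (simp add: s_def field_simps)
    then have "(1 - \<rho>) ^ (n + J) * B \<le> (1 - \<rho>) ^ (n + J) * s"
      using rho_less_1 by (intro mult_left_mono) auto
    then have "1 - \<rho> \<le> (1 - \<rho>) ^ (n + J) * s" using B by simp
    then have "tail_point s (n + J) \<in> {0..\<rho>}"
      using tail_point_le_rho[OF s] invlim_coord[OF tail_point_in_invlim[OF s]] by auto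
    then have "\<bar>(f ^^ J) (tail_point s (n + J)) - \<omega>\<^sub>0\<bar> < e" by (rule J)
    then have "\<bar>tail_point s n - \<omega>\<^sub>0\<bar> < e"
      using invlim_funpow[OF tail_point_in_invlim[OF s], of J n] by simp
    then show ?thesis using t by (simp add: param_def s_def dist_real_def)
  qed
  moreover have "0 < 1 / (1 + B)" using B by simp
  ultimately show "\<exists>d>0. \<forall>t\<in>{0..1}. t \<noteq> 0 \<and> dist t 0 < d \<longrightarrow> dist (param t n) (param 0 n) < e"
    by blast
qed

lemma continuous_on_param: "continuous_on {0..1} param"
proof (intro continuous_on_coordinatewise_then_product)
  fix n
  show "continuous_on {0..1} (\<lambda>t. param t n)"
    unfolding continuous_on_eq_continuous_within
  proof
    fix t :: real assume t: "t \<in> {0..1}"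
    show "continuous (at t within {0..1}) (\<lambda>t. param t n)"
    proof (cases "t = 0")
      case True
      then show ?thesis using continuous_param_coord_at_0 by simp
    next
      case False
      then have a: "0 < t / 2" "t / 2 < t" using t by auto
      have "at t within {0..1} = at t within {t / 2..1}"
        using a by (intro at_within_nhd[of _ "{t / 2<..}"]) auto
      moreover have "t \<in> {t / 2..1}" using a t by simp
      ultimately show ?thesis
        using continuous_on_param_coord_away_from_0[OF a(1)]
        by (simp add: continuous_on_eq_continuous_within)
    qed
  qed
qed

end

theorem theorem2:
  fixes \<rho> \<delta> \<gamma> \<alpha> :: real
  assumes "0 < \<rho>" "\<rho> < 1" "\<delta> > 0" "\<gamma> > - \<delta> / \<rho>"
    and "- \<delta> / \<rho> < \<alpha>" "\<alpha> < 0"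
    and "\<rho> > rho1 \<rho> \<delta> \<gamma> \<alpha>"
  shows "(\<exists>h g. homeomorphism (invlim \<rho> \<delta> \<gamma> \<alpha>) {0..1::real} h g
            \<and> strict_mono_on {0..1} (h \<circ> shift \<rho> \<delta> \<gamma> \<alpha> \<circ> g)
            \<and> (\<exists>\<psi>. homeomorphism {0..1} {0..1} (h \<circ> shift \<rho> \<delta> \<gamma> \<alpha> \<circ> g) \<psi>)
            \<and> {t \<in> {0..1}. (h \<circ> shift \<rho> \<delta> \<gamma> \<alpha> \<circ> g) t = t} = {0, 1}
            \<and> h (\<lambda>n. omega0 \<rho> \<delta> \<gamma> \<alpha>) = 0
            \<and> h (\<lambda>n. 1) = 1)
         \<and> invlim_type \<rho> \<delta> \<gamma> \<alpha> (\<lambda>n. 0) = {\<lambda>n. omega0 \<rho> \<delta> \<gamma> \<alpha>}"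
proof -
  interpret piecewise_mobius_map \<rho> \<delta> \<gamma> \<alpha>
    using assms by unfold_locales auto
  obtain h where hom: "homeomorphism {0..1} (invlim \<rho> \<delta> \<gamma> \<alpha>) param h"
    using homeomorphism_compact[OF compact_Icc continuous_on_param param_image inj_on_param] by blast
  have conj: "h (shift \<rho> \<delta> \<gamma> \<alpha> (param t)) = shift_model t" if "t \<in> {0..1}" for t
  proof -
    have "shift_model t \<in> {0..1}" using homeomorphism_image1[OF homeomorphism_shift_model] that by blast
    then show ?thesis using shift_param[OF that] homeomorphism_apply1[OF hom] by simp
  qed
  have "homeomorphism {0..1} {0..1} (h \<circ> shift \<rho> \<delta> \<gamma> \<alpha> \<circ> param) shift_model_inv"
    using homeomorphism_shift_model by (rule homeomorphism_cong) (simp_all add: conj)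
  moreover have "strict_mono_on {0..1} (h \<circ> shift \<rho> \<delta> \<gamma> \<alpha> \<circ> param)"
    using strict_mono_on_shift_model conj by (simp add: strict_mono_on_def)
  moreover have "{t \<in> {0..1}. (h \<circ> shift \<rho> \<delta> \<gamma> \<alpha> \<circ> param) t = t} = {0, 1}"
    using shift_model_fixpoints conj by auto
  moreover have "h (\<lambda>_. omega0 \<rho> \<delta> \<gamma> \<alpha>) = 0" "h (\<lambda>_. 1) = 1"
    using homeomorphism_apply1[OF hom, of 0] homeomorphism_apply1[OF hom, of 1] tail_point_0
    by (simp_all add: param_def)
  ultimately show ?thesis
    using homeomorphism_symD[OF hom] invlim_type_0
    by (intro conjI exI[of _ h] exI[of _ param]) blast+
qed

end
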